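(* In the algebra $\widehat{\mathcal R}(x)$ of non-associative formal power series without constant term in one variable $x$, the unique series $X$ with $\exp X=1+x$ is $$\log(1+x)=\sum_{\tau}\frac{B_\tau}{\tau!}\,\tau,$$ the sum running over all non-associative monomials $\tau$ in $x$.
   Context: $k$ is a field of characteristic $0$. $\widehat{\mathcal R}(x)$ consists of formal (infinite) linear combinations of non-associative monomials (rooted binary plane trees) in $x$ of degree $\ge1$, with the non-associative product extended bilinearly; $1+\widehat{\mathcal R}(x)$ lies in its unital completion. For $X\in\widehat{\mathcal R}(x)$, $\exp X=1+X+\frac{X^2}{2!}+\frac{X^2X}{3!}+\frac{(X^2X)X}{4!}+\cdots=\sum_{n\ge0}\frac{X^n}{n!}$ with left-normed powers $X^n=((XX)\cdots)X$. Bernoulli numbers $B_k$ are defined by $B_0=1$ and $\sum_{k=0}^{n-1}\frac{B_k}{k!(n-k)!}=0$ for $n\ge2$ (so $B_1=-1/2$). For a monomial $\tau$: if $\tau=x$ set $B_\tau=1$, $\tau!=1$; otherwise $\tau$ can be written uniquely as $(\cdots((x\tau_1)\tau_2)\cdots)\tau_k$ with $k\ge1$ and monomials $\tau_i$, and one sets $B_\tau=B_kB_{\tau_1}\cdots B_{\tau_k}$ and $\tau!=k!\,\tau_1!\cdots\tau_k!$. *)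

theory Defs
  imports Complex_Main
begin

text \<open>Non-associative monomials in one variable x: rooted binary plane trees.
  Leaf is the monomial x; Node a b is the product a b.\<close>
datatype nmono = X | Mul nmono nmono

fun deg :: "nmono \<Rightarrow> nat" where
  "deg X = 1"
| "deg (Mul a b) = deg a + deg b"

text \<open>Elements of the completed algebra without constant term: coefficient functions.\<close>
type_synonym 'k nseries = "nmono \<Rightarrow> 'k"

definition xser :: "'k::field nseries" where
  "xser t = (if t = X then 1 else 0)"

text \<open>Bilinear extension of the product: the monomial Mul a b arises only from a times b.\<close>
fun nmult :: "'k::field nseries \<Rightarrow> 'k nseries \<Rightarrow> 'k nseries" where
  "nmult F G X = 0"
| "nmult F G (Mul a b) = F a * G b"

fun npow :: "'k::field nseries \<Rightarrow> nat \<Rightarrow> 'k nseries" where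
  "npow F 0 = (\<lambda>_. 0)"
| "npow F (Suc 0) = F"
| "npow F (Suc (Suc n)) = nmult (npow F (Suc n)) F"

text \<open>exp F - 1 = sum over n \<ge> 1 of F^n / n!. The coefficient of t in F^n vanishes for n > deg t,
  so the formal infinite sum is computed coefficientwise by a finite sum.\<close>
definition nexpm1 :: "'k::field_char_0 nseries \<Rightarrow> 'k nseries" where
  "nexpm1 F t = (\<Sum>n\<in>{1..deg t}. npow F n t / fact n)"

text \<open>Bernoulli numbers: B_0 = 1 and sum_{k=0}^{n-1} B_k/(k!(n-k)!) = 0 for n \<ge> 2,
  i.e. (solving the relation for n+1) B_n = - n! * sum_{k<n} B_k / (k! (n+1-k)!).\<close>
fun bern :: "nat \<Rightarrow> 'k::field_char_0" where
  "bern n = (if n = 0 then 1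
             else - fact n * (\<Sum>k<n. bern k / (fact k * fact (n + 1 - k))))"

text \<open>Length k of the left spine: t = (...((x t_1) t_2)...) t_k.\<close>
fun spine_len :: "nmono \<Rightarrow> nat" where
  "spine_len X = 0"
| "spine_len (Mul a b) = Suc (spine_len a)"

text \<open>Product of B_{t_i} over the spine factors t_i; B_x = 1, B_t = B_k * prod B_{t_i}.\<close>
fun bprod :: "nmono \<Rightarrow> 'k::field_char_0" where
  "bprod X = 1"
| "bprod (Mul a b) = bprod a * (if b = X then 1 else bern (spine_len b) * bprod b)"

definition Btree :: "nmono \<Rightarrow> 'k::field_char_0" where
  "Btree t = (if t = X then 1 else bern (spine_len t) * bprod t)"

text \<open>Product of t_i! over the spine factors; x! = 1, t! = k! * prod t_i!.\<close>
fun fprod :: "nmono \<Rightarrow> nat" where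
  "fprod X = 1"
| "fprod (Mul a b) = fprod a * (if b = X then 1 else fact (spine_len b) * fprod b)"

definition tfact :: "nmono \<Rightarrow> nat" where
  "tfact t = (if t = X then 1 else fact (spine_len t) * fprod t)"

definition logser :: "'k::field_char_0 nseries" where
  "logser t = Btree t / of_nat (tfact t)"

end

theory Submission
  imports Defs
begin

text \<open>
  For a monomial t = (...((x t_1) t_2)...) t_k write k = spine_len t
  and P(t) for the product of the coefficients L(t_i), where L = sum B_tau/tau! tau
  is the candidate series.  Unfolding the definitions, L(t) = B_k/k! P(t).  Since
  the product only creates a monomial Mul a b from a and b, the left-normed power
  L^(n+1) has coefficient B_(k-n)/(k-n)! P(t) at t for n <= k and 0 otherwise.
  Hence the coefficient of t in exp L - 1 is P(t) times
  sum_(j<=k) B_j/(j!(k+1-j)!), and the defining recurrence of the Bernoulli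
  numbers makes this 1 for t = x and 0 otherwise: L solves exp L = 1 + x.
  Uniqueness holds for any series: for n >= 2 the coefficient of t in F^n only
  depends on coefficients of F at monomials of smaller degree, so
  exp F - 1 = exp G - 1 forces F = G by induction on the degree.
\<close>

text \<open>The recursive equation of bern unfolds without bound; it is used explicitly.\<close>
declare bern.simps [simp del]

lemma deg_pos: "deg t \<ge> 1"
  by (induction t) auto

lemma spine_len_less_deg: "spine_len t < deg t"
  by (induction t) (auto simp: deg_pos)

lemma fprod_pos: "fprod t > 0"
  by (induction t) auto

lemma bern_0 [simp]: "bern 0 = 1"
  by (subst bern.simps) simp

text \<open>The defining relation sum_(j<n) B_j/(j!(n-j)!) = 0 for n >= 2, shifted to
  n = k + 1 and including the trivial case k = 0.\<close>
lemma bern_sum: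
  "(\<Sum>j\<le>k. bern j / (fact j * fact (Suc k - j)) :: 'k::field_char_0) = (if k = 0 then 1 else 0)"
proof (cases "k = 0")
  case False
  define S :: 'k where "S = (\<Sum>j<k. bern j / (fact j * fact (k + 1 - j)))"
  have "bern k = - fact k * S"
    using False by (subst bern.simps) (simp add: S_def)
  then have "bern k / fact k = - S"
    by simp
  moreover have "(\<Sum>j\<le>k. bern j / (fact j * fact (Suc k - j)) :: 'k) = S + bern k / fact k"
    by (simp add: S_def lessThan_Suc_atMost[symmetric])
  ultimately show ?thesis
    using False by simp
qed simp

fun spine_prod :: "nmono \<Rightarrow> 'k::field_char_0" where
  "spine_prod X = 1"
| "spine_prod (Mul a b) = spine_prod a * logser b"

lemma bprod_div_fprod: "(bprod t :: 'k::field_char_0) / of_nat (fprod t) = spine_prod t"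
proof (induction t)
  case (Mul a b)
  have "logser b = (if b = X then 1 else bern (spine_len b) * bprod b)
                   / (of_nat (if b = X then 1 else fact (spine_len b) * fprod b) :: 'k)"
    unfolding logser_def Btree_def tfact_def by simp
  then show ?case
    using Mul fprod_pos[of a] by (simp add: field_simps)
qed simp

lemma logser_spine:
  "(logser t :: 'k::field_char_0) = bern (spine_len t) / fact (spine_len t) * spine_prod t"
proof -
  have "of_nat (tfact t) = (fact (spine_len t) * of_nat (fprod t) :: 'k)"
    by (cases t) (simp_all add: tfact_def del: fact_Suc)
  moreover have "Btree t = (bern (spine_len t) * bprod t :: 'k)"
    by (cases t) (simp_all add: Btree_def)
  ultimately have "logser t = bern (spine_len t) / fact (spine_len t) * (bprod t / of_nat (fprod t) :: 'k)"
    by (simp add: logser_def)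
  then show ?thesis
    by (simp add: bprod_div_fprod)
qed

text \<open>Coefficients of the powers of the candidate series: the power n + 1 consumes
  n spine factors, leaving B_(k-n)/(k-n)! in front of the spine product.\<close>
lemma npow_logser:
  "(npow logser (Suc n) t :: 'k::field_char_0) =
     (if n \<le> spine_len t then bern (spine_len t - n) / fact (spine_len t - n) * spine_prod t else 0)"
proof (induction t arbitrary: n)
  case X
  then show ?case
    by (cases n) (simp_all add: logser_spine)
next
  case (Mul a b)
  then show ?case
  proof (cases n)
    case 0
    then show ?thesis by (simp add: logser_spine)
  next
    case (Suc m)
    then have "npow logser (Suc n) (Mul a b) = npow logser (Suc m) a * (logser b :: 'k)"
      by simp
    then show ?thesis
      using Mul.IH(1)[of m] Suc by auto
  qed
qed

lemma nexpm1_logser: "nexpm1 (logser :: 'k::field_char_0 nseries) = xser"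
proof
  fix t
  define k where "k = spine_len t"
  have k_less: "k < deg t"
    using spine_len_less_deg[of t] by (simp add: k_def)
  have "nexpm1 logser t = (\<Sum>m<deg t. npow logser (Suc m) t / fact (Suc m) :: 'k)"
    unfolding nexpm1_def
    by (rule sum.reindex_bij_witness[where i=Suc and j="\<lambda>n. n - 1"]) auto
  also have "\<dots> = (\<Sum>m\<le>k. npow logser (Suc m) t / fact (Suc m))"
    by (rule sum.mono_neutral_right) (use k_less in \<open>auto simp: npow_logser k_def\<close>)
  also have "\<dots> = (\<Sum>m\<le>k. bern (k - m) / (fact (k - m) * fact (Suc m)) * spine_prod t)"
    by (rule sum.cong) (simp_all add: npow_logser k_def)
  also have "\<dots> = (\<Sum>j\<le>k. bern j / (fact j * fact (Suc k - j))) * spine_prod t"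
    unfolding sum_distrib_right[symmetric]
    by (rule arg_cong[where f="\<lambda>s. s * spine_prod t"],
        rule sum.reindex_bij_witness[where i="\<lambda>j. k - j" and j="\<lambda>m. k - m"])
       (auto simp: Suc_diff_le)
  also have "\<dots> = xser t"
    by (cases t) (simp_all add: bern_sum k_def xser_def)
  finally show "nexpm1 logser t = (xser t :: 'k)" .
qed

lemma npow_lower_degree:
  assumes "\<And>s. deg s < deg t \<Longrightarrow> F s = G s"
  shows "npow F (Suc (Suc m)) t = npow G (Suc (Suc m)) t"
  using assms
proof (induction m arbitrary: t)
  case 0
  show ?case
  proof (cases t)
    case (Mul a b)
    have "deg a < deg t" "deg b < deg t"
      using Mul deg_pos[of a] deg_pos[of b] by simp_all
    then show ?thesis
      using "0.prems" Mul by simp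
  qed simp
next
  case (Suc m)
  show ?case
  proof (cases t)
    case (Mul a b)
    have "npow F (Suc (Suc m)) a = npow G (Suc (Suc m)) a"
      using Suc.IH[of a] Suc.prems Mul deg_pos[of b] by simp
    moreover have "F b = G b"
      using Suc.prems Mul deg_pos[of a] by simp
    ultimately show ?thesis
      using Mul by simp
  qed simp
qed

lemma nexpm1_split:
  "nexpm1 F t = F t + (\<Sum>n\<in>{2..deg t}. npow F n t / fact n)"
  unfolding nexpm1_def
  by (subst sum.atLeast_Suc_atMost[OF deg_pos]) (simp add: numeral_2_eq_2)

text \<open>Injectivity of exp - 1: the coefficient F(t) is recovered from (exp F - 1)(t)
  and the coefficients of F at lower degrees.\<close>
lemma nexpm1_inj:
  assumes eq: "nexpm1 F = nexpm1 (G :: 'k::field_char_0 nseries)"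
  shows "F = G"
proof
  fix t
  show "F t = G t"
  proof (induction "deg t" arbitrary: t rule: less_induct)
    case less
    have "npow F n t = npow G n t" if "n \<in> {2..deg t}" for n
    proof -
      have "n = Suc (Suc (n - 2))"
        using that by auto
      then show ?thesis
        using npow_lower_degree[of t F G "n - 2"] less by metis
    qed
    then have "(\<Sum>n\<in>{2..deg t}. npow F n t / fact n) = (\<Sum>n\<in>{2..deg t}. npow G n t / fact n)"
      by (intro sum.cong) simp_all
    then show "F t = G t"
      using eq nexpm1_split[of F t] nexpm1_split[of G t] by simp
  qed
qed

theorem mainTheorem18:
  "\<forall>F :: 'k::field_char_0 nseries. nexpm1 F = xser \<longleftrightarrow> F = logser"
  using nexpm1_logser nexpm1_inj by metis

end
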